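(* Let $n\ge 2$, fix $\boldsymbol{\rho}^0\in\mathcal{P}_n$ and $\alpha\in(0,\infty)$, and let $\mathbf{R}=(R_1,\dots,R_n)\sim\mathrm{Mallows}(\boldsymbol{\rho}^0,\alpha)$ with the footrule distance. For $i=1,\dots,n$ let $o^0_i$ be the item with $\rho^0_{o^0_i}=i$. Then for every $j\in\{1,\dots,n-1\}$, $$\mathbb{E}[R_{o^0_j}\mid \boldsymbol{\rho}^0,\alpha] < \mathbb{E}[R_{o^0_{j+1}}\mid \boldsymbol{\rho}^0,\alpha].$$
   Context: $\mathcal{P}_n$ denotes the set of permutations of $\{1,\dots,n\}$; a ranking $\mathbf{r}\in\mathcal{P}_n$ assigns rank $r_i$ to item $i$. The footrule distance is $d(\mathbf{r},\boldsymbol{\rho})=\sum_{i=1}^n|r_i-\rho_i|$. The Mallows distribution $\mathrm{Mallows}(\boldsymbol{\rho}^0,\alpha)$ on $\mathcal{P}_n$ has probability mass function $P(\mathbf{R}=\mathbf{r}\mid\boldsymbol{\rho}^0,\alpha)=\frac{1}{Z_n(\alpha)}\exp\{-\frac{\alpha}{n}d(\mathbf{r},\boldsymbol{\rho}^0)\}$, where $Z_n(\alpha)=\sum_{\mathbf{r}\in\mathcal{P}_n}\exp\{-\frac{\alpha}{n}d(\mathbf{r},\boldsymbol{\rho}^0)\}$ (which does not depend on $\boldsymbol{\rho}^0$). *)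

theory Defs
  imports "HOL-Combinatorics.Permutations" Complex_Main
begin

text \<open>Rankings of n items: permutations of {1..n}, represented as functions
  nat \<Rightarrow> nat permuting {1..n} (identity outside).  r i is the rank of item i.\<close>

definition rankings :: "nat \<Rightarrow> (nat \<Rightarrow> nat) set" where
  "rankings n = {r. r permutes {1..n}}"

definition footrule :: "nat \<Rightarrow> (nat \<Rightarrow> nat) \<Rightarrow> (nat \<Rightarrow> nat) \<Rightarrow> real" where
  "footrule n r \<rho> = (\<Sum>i=1..n. \<bar>real (r i) - real (\<rho> i)\<bar>)"

definition mallows_Z :: "nat \<Rightarrow> (nat \<Rightarrow> nat) \<Rightarrow> real \<Rightarrow> real" where
  "mallows_Z n \<rho>0 \<alpha> = (\<Sum>r\<in>rankings n. exp (- (\<alpha> / real n) * footrule n r \<rho>0))"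

definition mallows_pmf :: "nat \<Rightarrow> (nat \<Rightarrow> nat) \<Rightarrow> real \<Rightarrow> (nat \<Rightarrow> nat) \<Rightarrow> real" where
  "mallows_pmf n \<rho>0 \<alpha> r =
     exp (- (\<alpha> / real n) * footrule n r \<rho>0) / mallows_Z n \<rho>0 \<alpha>"

definition mallows_exp_rank :: "nat \<Rightarrow> (nat \<Rightarrow> nat) \<Rightarrow> real \<Rightarrow> nat \<Rightarrow> real" where
  "mallows_exp_rank n \<rho>0 \<alpha> i = (\<Sum>r\<in>rankings n. mallows_pmf n \<rho>0 \<alpha> r * real (r i))"

end

theory Submission
  imports Defs
begin

text \<open>Pair each ranking r having r a < r b with r \<circ> transpose a b, which exchanges the ranks
  of items a and b. If \<rho>0 a < \<rho>0 b, the ranking that agrees with \<rho>0 on the order of a and b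
  is never farther from \<rho>0 in footrule distance, hence never less likely; so
  E[R b] - E[R a] is a sum of nonnegative terms, and the term of r = \<rho>0 is positive.\<close>

lemma finite_rankings: "finite (rankings n)"
  unfolding rankings_def by (rule finite_permutations) simp

lemma comp_transpose_in_rankings:
  assumes "r \<in> rankings n" "a \<in> {1..n}" "b \<in> {1..n}"
  shows "r \<circ> transpose a b \<in> rankings n"
  using assms permutes_compose[OF permutes_swap_id[OF assms(2,3)]] by (simp add: rankings_def)

lemma sum_rankings_transpose_pairs:
  assumes a: "a \<in> {1..n}" and b: "b \<in> {1..n}" and "a \<noteq> b"
  shows "(\<Sum>r\<in>rankings n. f r) =
    (\<Sum>r | r \<in> rankings n \<and> r a < r b. f r + f (r \<circ> transpose a b))"
proof -
  define A where "A = {r \<in> rankings n. r a < r b}"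
  define B where "B = {r \<in> rankings n. r b < r a}"
  have "r a \<noteq> r b" if "r \<in> rankings n" for r
    using that \<open>a \<noteq> b\<close> permutes_inj[of r "{1..n}"] by (auto simp: rankings_def inj_def)
  then have split: "rankings n = A \<union> B"
    unfolding A_def B_def using linorder_neqE_nat by blast
  have "bij_betw (\<lambda>r. r \<circ> transpose a b) A B"
    by (rule bij_betw_byWitness[where f' = "\<lambda>r. r \<circ> transpose a b"])
       (auto simp: A_def B_def comp_transpose_in_rankings[OF _ a b])
  then have "sum f B = (\<Sum>r\<in>A. f (r \<circ> transpose a b))"
    by (rule sum.reindex_bij_betw[symmetric])
  moreover have "sum f (rankings n) = sum f A + sum f B"
    unfolding split by (intro sum.union_disjoint) (auto simp: A_def B_def finite_rankings)
  ultimately show ?thesis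
    by (simp add: A_def sum.distrib)
qed

lemma footrule_comp_transpose:
  assumes ab: "a \<in> {1..n}" "b \<in> {1..n}" "a \<noteq> b"
  shows "footrule n (r \<circ> transpose a b) \<rho> - footrule n r \<rho> =
    (\<bar>real (r b) - real (\<rho> a)\<bar> + \<bar>real (r a) - real (\<rho> b)\<bar>)
   - (\<bar>real (r a) - real (\<rho> a)\<bar> + \<bar>real (r b) - real (\<rho> b)\<bar>)"
proof -
  let ?f = "\<lambda>s i. \<bar>real (s i) - real (\<rho> i)\<bar>"
  let ?rest = "{1..n} - {a} - {b}"
  have split: "sum (?f s) {1..n} = ?f s a + ?f s b + sum (?f s) ?rest" for s
  proof -
    have "sum (?f s) {1..n} = ?f s a + sum (?f s) ({1..n} - {a})"
      using ab(1) by (intro sum.remove) auto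
    also have "sum (?f s) ({1..n} - {a}) = ?f s b + sum (?f s) ?rest"
      using ab by (intro sum.remove) auto
    finally show ?thesis by simp
  qed
  have "sum (?f (r \<circ> transpose a b)) ?rest = sum (?f r) ?rest"
    by (rule sum.cong) auto
  then show ?thesis
    unfolding footrule_def split by simp
qed

lemma abs_diff_add_le_crossed:
  fixes x y u v :: "'a :: linordered_idom"
  assumes "x \<le> y" "u \<le> v"
  shows "\<bar>x - u\<bar> + \<bar>y - v\<bar> \<le> \<bar>y - u\<bar> + \<bar>x - v\<bar>"
  using assms by (auto simp: abs_if)

lemma footrule_le_comp_transpose:
  assumes "a \<in> {1..n}" "b \<in> {1..n}" "r a < r b" "\<rho> a < \<rho> b"
  shows "footrule n r \<rho> \<le> footrule n (r \<circ> transpose a b) \<rho>"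
proof -
  have "a \<noteq> b" using assms(4) by auto
  then show ?thesis
    using footrule_comp_transpose[OF assms(1,2), of r \<rho>] assms(3,4)
      abs_diff_add_le_crossed[of "real (r a)" "real (r b)" "real (\<rho> a)" "real (\<rho> b)"]
    by simp
qed

lemma footrule_self: "footrule n \<rho> \<rho> = 0"
  by (simp add: footrule_def)

lemma footrule_comp_transpose_self:
  assumes "a \<in> {1..n}" "b \<in> {1..n}" "\<rho> a < \<rho> b"
  shows "footrule n (\<rho> \<circ> transpose a b) \<rho> = 2 * (real (\<rho> b) - real (\<rho> a))"
  using footrule_comp_transpose[OF assms(1,2), of \<rho> \<rho>] assms(3)
  by (auto simp: footrule_self)

lemma mallows_Z_pos: "mallows_Z n \<rho>0 \<alpha> > 0"
proof -
  have "id \<in> rankings n"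
    by (simp add: rankings_def permutes_id)
  then show ?thesis
    unfolding mallows_Z_def by (intro sum_pos finite_rankings) auto
qed

lemma mallows_pmf_antimono:
  assumes "\<alpha> \<ge> 0" "footrule n r \<rho>0 \<le> footrule n s \<rho>0"
  shows "mallows_pmf n \<rho>0 \<alpha> s \<le> mallows_pmf n \<rho>0 \<alpha> r"
  using assms mallows_Z_pos[of n \<rho>0 \<alpha>]
  by (auto simp: mallows_pmf_def divide_right_mono mult_left_mono)

lemma mallows_pmf_strict_antimono:
  assumes "\<alpha> > 0" "n > 0" "footrule n r \<rho>0 < footrule n s \<rho>0"
  shows "mallows_pmf n \<rho>0 \<alpha> s < mallows_pmf n \<rho>0 \<alpha> r"
  using assms mallows_Z_pos[of n \<rho>0 \<alpha>]
  by (auto simp: mallows_pmf_def divide_strict_right_mono)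

theorem mallows_exp_rank_strict_mono:
  assumes \<rho>0: "\<rho>0 \<in> rankings n" and "\<alpha> > 0"
    and a: "a \<in> {1..n}" and b: "b \<in> {1..n}" and less: "\<rho>0 a < \<rho>0 b"
  shows "mallows_exp_rank n \<rho>0 \<alpha> a < mallows_exp_rank n \<rho>0 \<alpha> b"
proof -
  let ?p = "mallows_pmf n \<rho>0 \<alpha>"
  let ?\<sigma> = "\<lambda>r::nat \<Rightarrow> nat. r \<circ> transpose a b"
  have "a \<noteq> b" using less by auto
  have "mallows_exp_rank n \<rho>0 \<alpha> b - mallows_exp_rank n \<rho>0 \<alpha> a
      = (\<Sum>r\<in>rankings n. ?p r * (real (r b) - real (r a)))"
    by (simp add: mallows_exp_rank_def sum_subtractf[symmetric] algebra_simps)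
  also have "\<dots> = (\<Sum>r | r \<in> rankings n \<and> r a < r b.
                   (?p r - ?p (?\<sigma> r)) * (real (r b) - real (r a)))"
    by (simp add: sum_rankings_transpose_pairs[OF a b \<open>a \<noteq> b\<close>] algebra_simps)
  also have "\<dots> > 0"
  proof (rule sum_pos2)
    show "finite {r. r \<in> rankings n \<and> r a < r b}"
      using finite_rankings by simp
    show "\<rho>0 \<in> {r. r \<in> rankings n \<and> r a < r b}"
      using \<rho>0 less by simp
    have "footrule n \<rho>0 \<rho>0 < footrule n (?\<sigma> \<rho>0) \<rho>0"
      using footrule_comp_transpose_self[OF a b less] less by (simp add: footrule_self)
    then have "?p (?\<sigma> \<rho>0) < ?p \<rho>0"
      using \<open>\<alpha> > 0\<close> a by (intro mallows_pmf_strict_antimono) auto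
    then show "0 < (?p \<rho>0 - ?p (?\<sigma> \<rho>0)) * (real (\<rho>0 b) - real (\<rho>0 a))"
      using less by simp
    fix r assume "r \<in> {r. r \<in> rankings n \<and> r a < r b}"
    then have "?p (?\<sigma> r) \<le> ?p r" and "r a < r b"
      using \<open>\<alpha> > 0\<close> footrule_le_comp_transpose[OF a b _ less]
      by (auto intro: mallows_pmf_antimono)
    then show "0 \<le> (?p r - ?p (?\<sigma> r)) * (real (r b) - real (r a))"
      by simp
  qed
  finally show ?thesis by simp
qed

theorem lemma1:
  fixes n :: nat and \<rho>0 :: "nat \<Rightarrow> nat" and \<alpha> :: real and j :: nat
  assumes "n \<ge> 2"
    and "\<rho>0 \<in> rankings n"
    and "\<alpha> > 0"
    and "1 \<le> j" and "j \<le> n - 1"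
  shows "mallows_exp_rank n \<rho>0 \<alpha> (inv \<rho>0 j) < mallows_exp_rank n \<rho>0 \<alpha> (inv \<rho>0 (j + 1))"
proof -
  have perm: "\<rho>0 permutes {1..n}"
    using assms(2) by (simp add: rankings_def)
  have "inv \<rho>0 k \<in> {1..n}" and "\<rho>0 (inv \<rho>0 k) = k" if "k \<in> {1..n}" for k
    using that permutes_in_image[OF permutes_inv[OF perm]] permutes_inverses(1)[OF perm] by auto
  then show ?thesis
    using assms by (intro mallows_exp_rank_strict_mono) auto
qed

end
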